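(* Let $X$ be a compact metric space, $T\colon X\to X$ a homeomorphism and $\mu$ an ergodic $T$-invariant Borel probability measure. Let $H\colon X\to\mathbb{GL}^+(2,\mathbb{R})$ be continuous of the form $H(x)=\begin{pmatrix}\lambda(x)&0\\ \sigma(x)&\eta(x)\end{pmatrix}$ with $\eta(x)>0$, such that the cocycle $H$ over $T$ has dominated splitting $\mathbb{R}^2=E(x)\oplus F(x)$ with dominating direction $F(x)=\mathrm{span}(\mathbf{e}_2)$, $\mathbf{e}_2=(0,1)$. Let $H_\theta(x)=H(x)R_\theta=\begin{pmatrix}a_\theta(x)&b_\theta(x)\\ c_\theta(x)&d_\theta(x)\end{pmatrix}$. Suppose $\varepsilon_0>0$ is such that for $|\theta|<\varepsilon_0$ the cocycle $H_\theta$ has dominated splitting $E_\theta(x)\oplus F_\theta(x)$ with dominating direction $F_\theta(x)=\mathrm{span}((u_\theta(x),1))$, where $(\theta,x)\mapsto u_\theta(x)$ is continuous and $u_0\equiv0$. Write $\lambda^+(\theta)=\lambda^+(H_\theta)$ and $\lambda^-(0)=\lambda^-(H)$. Then there exists $\varepsilon>0$ such that for $|\theta|<\varepsilon$, $$\lambda^+(\theta)=\lambda^+(0)+\lambda^-(0)-\int_X\log\bigl(a_\theta(x)-c_\theta(x)u_\theta(Tx)\bigr)\,d\mu(x).$$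
   Context: $R_\theta$: rotation by angle $\theta$. For continuous $B\colon X\to\mathbb{GL}(2,\mathbb{R})$: cocycle $(x,v)\mapsto(Tx,B(x)v)$, $B^n(x)=B(T^{n-1}x)\cdots B(x)$, $B^{-n}(x)=B(T^{-n}x)^{-1}\cdots B(T^{-1}x)^{-1}$, $\lambda^+(B)=\lim\frac1n\log\|B^n(x)\|$, $\lambda^-(B)=\lim\frac1n\log\|B^{-n}(x)\|^{-1}$ ($\mu$-a.e. constant). Dominated splitting: continuous invariant decomposition $\mathbb{R}^2=E(x)\oplus F(x)$ into lines and an integer $l\ge1$ with $\|B^l(x)|_{E(x)}\|\cdot\|B^{-l}(T^lx)|_{F(T^lx)}\|<\tfrac12$ for all $x$; $F$ is called the dominating direction. *)

theory Defs
  imports "HOL-Probability.Probability"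
begin

type_synonym mat2 = "real^2^2"

definition rot :: "real \<Rightarrow> mat2" where
  "rot \<theta> = (\<chi> i j. if i = 1 then (if j = 1 then cos \<theta> else - sin \<theta>)
                       else (if j = 1 then sin \<theta> else cos \<theta>))"

definition mnorm :: "mat2 \<Rightarrow> real" where
  "mnorm A = onorm (\<lambda>v. A *v v)"

definition restr_norm :: "mat2 \<Rightarrow> (real^2) set \<Rightarrow> real" where
  "restr_norm A L = Sup {norm (A *v v) | v. v \<in> L \<and> norm v = 1}"

fun cocyc :: "('a \<Rightarrow> 'a) \<Rightarrow> ('a \<Rightarrow> mat2) \<Rightarrow> nat \<Rightarrow> 'a \<Rightarrow> mat2" where
  "cocyc T B 0 x = mat 1"
| "cocyc T B (Suc n) x = B ((T ^^ n) x) ** cocyc T B n x"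

fun cocyc_inv :: "('a \<Rightarrow> 'a) \<Rightarrow> ('a \<Rightarrow> mat2) \<Rightarrow> nat \<Rightarrow> 'a \<Rightarrow> mat2" where
  "cocyc_inv T B 0 x = mat 1"
| "cocyc_inv T B (Suc n) x = matrix_inv (B ((inv T ^^ Suc n) x)) ** cocyc_inv T B n x"

definition lyap_plus :: "'a measure \<Rightarrow> ('a \<Rightarrow> 'a) \<Rightarrow> ('a \<Rightarrow> mat2) \<Rightarrow> real" where
  "lyap_plus M T B = (THE c. AE x in M.
      (\<lambda>n. ln (mnorm (cocyc T B n x)) / real n) \<longlonglongrightarrow> c)"

definition lyap_minus :: "'a measure \<Rightarrow> ('a \<Rightarrow> 'a) \<Rightarrow> ('a \<Rightarrow> mat2) \<Rightarrow> real" where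
  "lyap_minus M T B = (THE c. AE x in M.
      (\<lambda>n. ln (inverse (mnorm (cocyc_inv T B n x))) / real n) \<longlonglongrightarrow> c)"

definition is_line :: "(real^2) set \<Rightarrow> bool" where
  "is_line L \<longleftrightarrow> subspace L \<and> dim L = 1"

definition continuous_line_field :: "('a::topological_space \<Rightarrow> (real^2) set) \<Rightarrow> bool" where
  "continuous_line_field E \<longleftrightarrow> (\<forall>x. is_line (E x)) \<and>
     (\<forall>x. \<exists>U v. open U \<and> x \<in> U \<and> continuous_on U v \<and>
          (\<forall>y\<in>U. v y \<noteq> 0 \<and> E y = span {v y}))"

definition dominated_splitting ::
  "('a::topological_space \<Rightarrow> 'a) \<Rightarrow> ('a \<Rightarrow> mat2) \<Rightarrow> ('a \<Rightarrow> (real^2) set) \<Rightarrow> ('a \<Rightarrow> (real^2) set) \<Rightarrow> bool" where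
  "dominated_splitting T B E F \<longleftrightarrow>
     continuous_line_field E \<and> continuous_line_field F \<and>
     (\<forall>x. E x \<inter> F x = {0}) \<and>
     (\<forall>x. (\<lambda>v. B x *v v) ` E x = E (T x) \<and> (\<lambda>v. B x *v v) ` F x = F (T x)) \<and>
     (\<exists>l::nat. l \<ge> 1 \<and> (\<forall>x. restr_norm (cocyc T B l x) (E x) *
         restr_norm (cocyc_inv T B l ((T ^^ l) x)) (F ((T ^^ l) x)) < 1/2))"

definition ergodic_mp :: "'a measure \<Rightarrow> ('a \<Rightarrow> 'a) \<Rightarrow> bool" where
  "ergodic_mp M T \<longleftrightarrow> T \<in> measurable M M \<and>
     (\<forall>A\<in>sets M. measure M (T -` A \<inter> space M) = measure M A) \<and>
     (\<forall>A\<in>sets M. T -` A \<inter> space M = A \<longrightarrow> measure M A = 0 \<or> measure M A = 1)"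

end

theory Submission
  imports Defs
begin

text \<open>Along the invariant graph direction \<open>F(x) = span (w x, 1)\<close> the cocycle acts by the scalar
  \<open>g x = b\<^sub>2\<^sub>1 w x + b\<^sub>2\<^sub>2\<close>, since \<open>B x (w x, 1) = g x (w (T x), 1)\<close>. Domination and a lower bound on
  the angle between \<open>E\<close> and \<open>F\<close> (from compactness) show that \<open>\<parallel>B\<^sup>n(x)\<parallel>\<close> stays within a
  bounded factor of \<open>g x \<cdot> \<dots> \<cdot> g (T\<^sup>n\<^sup>-\<^sup>1 x)\<close>, so Birkhoff's ergodic theorem gives
  \<open>\<lambda>\<^sup>+ = \<integral> log g\<close>. In dimension two \<open>\<parallel>A\<^sup>-\<^sup>1\<parallel>\<close> is comparable to \<open>\<parallel>A\<parallel> / det A\<close>, whence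
  \<open>\<lambda>\<^sup>- = \<integral> log det B - \<integral> log g\<close>. The first row of the invariance relation gives
  \<open>b\<^sub>1\<^sub>1 - b\<^sub>2\<^sub>1 w (T x) = det B x / g x\<close>. Applied to \<open>H R\<^sub>\<theta>\<close>, whose determinant is that of \<open>H\<close>,
  these identities combine to the formula; \<open>g\<close> stays positive along the family because it
  never vanishes and is positive at \<open>\<theta> = 0\<close>.\<close>

section \<open>Birkhoff's ergodic theorem for bounded functions\<close>

definition birkhoff_sum :: "('a \<Rightarrow> 'a) \<Rightarrow> ('a \<Rightarrow> real) \<Rightarrow> nat \<Rightarrow> 'a \<Rightarrow> real" where
  "birkhoff_sum T f n x = (\<Sum>i<n. f ((T ^^ i) x))"

lemma birkhoff_sum_0 [simp]: "birkhoff_sum T f 0 x = 0"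
  by (simp add: birkhoff_sum_def)

lemma birkhoff_sum_Suc: "birkhoff_sum T f (Suc n) x = f x + birkhoff_sum T f n (T x)"
  unfolding birkhoff_sum_def sum.lessThan_Suc_shift by (simp add: funpow_swap1)

lemma birkhoff_sum_Suc_right: "birkhoff_sum T f (Suc n) x = birkhoff_sum T f n x + f ((T ^^ n) x)"
  by (simp add: birkhoff_sum_def)

lemma birkhoff_sum_diff_shift:
  "birkhoff_sum T f n (T x) - birkhoff_sum T f n x = f ((T ^^ n) x) - f x"
  using birkhoff_sum_Suc[of T f n x] birkhoff_sum_Suc_right[of T f n x] by linarith

lemma birkhoff_sum_diff_const: "birkhoff_sum T (\<lambda>x. f x - c) n x = birkhoff_sum T f n x - c * n"
  by (simp add: birkhoff_sum_def sum_subtractf)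

lemma birkhoff_sum_uminus: "birkhoff_sum T (\<lambda>x. - f x) n x = - birkhoff_sum T f n x"
  by (simp add: birkhoff_sum_def sum_negf)

lemma abs_birkhoff_sum_le: "(\<And>x. \<bar>f x\<bar> \<le> c) \<Longrightarrow> \<bar>birkhoff_sum T f n x\<bar> \<le> n * c"
  unfolding birkhoff_sum_def
  using sum_bounded_above[of "{..<n}" "\<lambda>i. \<bar>f ((T ^^ i) x)\<bar>" c]
  by (intro order_trans[OF sum_abs]) auto

lemma funpow_funpow_inv:
  assumes "bij T" "k \<le> n"
  shows "(T ^^ k) ((inv T ^^ n) x) = (inv T ^^ (n - k)) x"
proof -
  have "(inv T ^^ n) x = (inv T ^^ k) ((inv T ^^ (n - k)) x)"
    by (metis assms(2) comp_apply funpow_add le_add_diff_inverse)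
  then show ?thesis
    using fn_o_inv_fn_is_id[OF assms(1), of k] by (simp add: fun_eq_iff)
qed

lemma birkhoff_sum_inv:
  assumes "bij T"
  shows "birkhoff_sum T f n ((inv T ^^ n) x) = birkhoff_sum (inv T) (\<lambda>y. f (inv T y)) n x"
proof -
  have "birkhoff_sum T f n ((inv T ^^ n) x) = (\<Sum>k<n. f ((inv T ^^ (n - k)) x))"
    unfolding birkhoff_sum_def by (rule sum.cong) (simp_all add: funpow_funpow_inv[OF assms])
  also have "\<dots> = (\<Sum>k<n. (\<lambda>i. f ((inv T ^^ Suc i) x)) (n - Suc k))"
    by (rule sum.cong) (simp_all add: Suc_diff_Suc)
  also have "\<dots> = birkhoff_sum (inv T) (\<lambda>y. f (inv T y)) n x"
    unfolding birkhoff_sum_def by (subst sum.nat_diff_reindex) (simp add: funpow_swap1)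
  finally show ?thesis .
qed

definition birkhoff_max :: "('a \<Rightarrow> 'a) \<Rightarrow> ('a \<Rightarrow> real) \<Rightarrow> nat \<Rightarrow> 'a \<Rightarrow> real" where
  "birkhoff_max T f N x = Max ((\<lambda>k. birkhoff_sum T f k x) ` {..N})"

lemma birkhoff_sum_le_max: "k \<le> N \<Longrightarrow> birkhoff_sum T f k x \<le> birkhoff_max T f N x"
  by (simp add: birkhoff_max_def)

lemma birkhoff_max_nonneg: "0 \<le> birkhoff_max T f N x"
  using birkhoff_sum_le_max[of 0 N T f x] by simp

lemma birkhoff_max_attained: "\<exists>k\<le>N. birkhoff_max T f N x = birkhoff_sum T f k x"
proof -
  have "birkhoff_max T f N x \<in> (\<lambda>k. birkhoff_sum T f k x) ` {..N}"
    unfolding birkhoff_max_def by (intro Max_in) auto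
  then show ?thesis by auto
qed

lemma abs_birkhoff_max_le:
  assumes bound: "\<And>x. \<bar>f x\<bar> \<le> c"
  shows "\<bar>birkhoff_max T f N x\<bar> \<le> N * c"
proof -
  obtain k where k: "k \<le> N" "birkhoff_max T f N x = birkhoff_sum T f k x"
    using birkhoff_max_attained[of N T f x] by auto
  have "0 \<le> c" using bound[of x] by linarith
  have "\<bar>birkhoff_sum T f k x\<bar> \<le> k * c"
    using bound by (rule abs_birkhoff_sum_le)
  also have "\<dots> \<le> N * c"
    using k(1) \<open>0 \<le> c\<close> by (intro mult_right_mono) auto
  finally show ?thesis using k(2) by simp
qed

text \<open>Where the maximum is positive it is attained at some \<open>k \<ge> 1\<close>, and
  \<open>S\<^sub>k x = f x + S\<^sub>k\<^sub>-\<^sub>1 (T x)\<close>.\<close>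
lemma birkhoff_max_shift_le:
  "birkhoff_max T f N x - birkhoff_max T f N (T x) \<le> indicator {x. 0 < birkhoff_max T f N x} x * f x"
proof (cases "0 < birkhoff_max T f N x")
  case True
  obtain k where k: "k \<le> N" "birkhoff_max T f N x = birkhoff_sum T f k x"
    using birkhoff_max_attained[of N T f x] by auto
  with True obtain k' where "k = Suc k'" by (cases k) auto
  with k have "birkhoff_max T f N x = f x + birkhoff_sum T f k' (T x)" "k' \<le> N"
    by (simp_all add: birkhoff_sum_Suc)
  then show ?thesis
    using True birkhoff_sum_le_max[of k' N T f "T x"] by simp
next
  case False
  then show ?thesis using birkhoff_max_nonneg[of T f N "T x"] by simp
qed

lemma frequently_linear_gt_perturb:
  fixes a b :: "nat \<Rightarrow> real" and c d K :: real
  assumes close: "\<And>n. \<bar>a n - b n\<bar> \<le> K" and "0 < d"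
    and freq: "\<exists>\<^sub>F n in sequentially. (c + d) * n < a n"
  shows "\<exists>\<^sub>F n in sequentially. (c + d / 2) * n < b n"
proof -
  obtain N :: nat where "2 * K / d \<le> N"
    using real_arch_simple by blast
  then have "2 * K \<le> d * N"
    using \<open>0 < d\<close> by (simp add: divide_le_eq mult.commute)
  moreover have "d * N \<le> d * n" if "N \<le> n" for n :: nat
    using \<open>0 < d\<close> that by (intro mult_left_mono) auto
  ultimately have "\<forall>\<^sub>F n in sequentially. 2 * K \<le> d * n"
    by (intro eventually_sequentiallyI[of N]) (meson order_trans)
  with freq have "\<exists>\<^sub>F n in sequentially. (c + d) * n < a n \<and> 2 * K \<le> d * n"
    by (rule frequently_eventually_frequently)
  then show ?thesis
  proof (rule frequently_elim1)
    fix n assume "(c + d) * n < a n \<and> 2 * K \<le> d * n"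
    then show "(c + d / 2) * n < b n"
      using close[of n] by (simp add: algebra_simps abs_le_iff)
  qed
qed

text \<open>The margin \<open>1 / Suc j\<close> makes the set exactly \<open>T\<close>-invariant while keeping it countably
  described.\<close>
definition birkhoff_exceed :: "('a \<Rightarrow> 'a) \<Rightarrow> ('a \<Rightarrow> real) \<Rightarrow> real \<Rightarrow> 'a set" where
  "birkhoff_exceed T f c =
     {x. \<exists>j::nat. \<exists>\<^sub>F n in sequentially. (c + 1 / Suc j) * n < birkhoff_sum T f n x}"

lemma birkhoff_exceed_invariant:
  assumes bound: "\<And>x. \<bar>f x\<bar> \<le> K"
  shows "T -` birkhoff_exceed T f c = birkhoff_exceed T f c"
proof -
  have close: "\<bar>birkhoff_sum T f n (T x) - birkhoff_sum T f n x\<bar> \<le> 2 * K" for n x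
    using birkhoff_sum_diff_shift[of T f n x] bound[of x] bound[of "(T ^^ n) x"] by linarith
  have half: "1 / real (Suc j) / 2 = 1 / Suc (2 * j + 1)" for j
    by (simp add: field_simps)
  have step: "\<exists>j'. \<exists>\<^sub>F n in sequentially. (c + 1 / Suc j') * n < b n"
    if "\<And>n. \<bar>a n - b n\<bar> \<le> 2 * K" and "\<exists>\<^sub>F n in sequentially. (c + 1 / Suc j) * n < a n"
    for a b :: "nat \<Rightarrow> real" and j
  proof -
    have "\<exists>\<^sub>F n in sequentially. (c + 1 / Suc j / 2) * n < b n"
      by (rule frequently_linear_gt_perturb[OF that(1) _ that(2)]) simp
    then show ?thesis unfolding half by blast
  qed
  have close': "\<bar>birkhoff_sum T f n x - birkhoff_sum T f n (T x)\<bar> \<le> 2 * K" for n x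
    using close[of n x] by linarith
  show ?thesis
    unfolding birkhoff_exceed_def using step[OF close] step[OF close'] by auto
qed

locale ergodic_system = prob_space M for M :: "'a measure" +
  fixes T :: "'a \<Rightarrow> 'a"
  assumes space_eq: "space M = UNIV" and ergodic: "ergodic_mp M T"
begin

lemma measurable_T [measurable]: "T \<in> measurable M M"
  using ergodic by (simp add: ergodic_mp_def)

lemma measure_vimage_T: "A \<in> sets M \<Longrightarrow> measure M (T -` A) = measure M A"
  using ergodic by (simp add: ergodic_mp_def space_eq)

lemma invariant_set_trivial:
  "A \<in> sets M \<Longrightarrow> T -` A = A \<Longrightarrow> measure M A = 0 \<or> measure M A = 1"
  using ergodic by (simp add: ergodic_mp_def space_eq)

lemma distr_T: "distr M M T = M"
proof (rule measure_eqI)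
  fix A assume "A \<in> sets (distr M M T)"
  then show "emeasure (distr M M T) A = emeasure M A"
    using measure_vimage_T measurable_sets[OF measurable_T]
    by (simp add: emeasure_distr emeasure_eq_measure space_eq)
qed simp

lemma integral_comp_T:
  fixes f :: "'a \<Rightarrow> real"
  assumes [measurable]: "f \<in> borel_measurable M"
  shows "(\<integral>x. f (T x) \<partial>M) = (\<integral>x. f x \<partial>M)"
  using integral_distr[of T M M f] by (simp add: distr_T)

lemma birkhoff_sum_measurable [measurable]:
  assumes [measurable]: "f \<in> borel_measurable M"
  shows "birkhoff_sum T f n \<in> borel_measurable M"
proof -
  have [measurable]: "(\<lambda>x. f ((T ^^ i) x)) \<in> borel_measurable M" for i
    using measurable_compose[OF measurable_compose_n[OF measurable_T]] by simp
  show ?thesis unfolding birkhoff_sum_def by measurable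
qed

lemma birkhoff_max_measurable [measurable]:
  "f \<in> borel_measurable M \<Longrightarrow> birkhoff_max T f N \<in> borel_measurable M"
  unfolding birkhoff_max_def by measurable

lemma maximal_ergodic_inequality_finite:
  assumes [measurable]: "f \<in> borel_measurable M" and bound: "\<And>x. \<bar>f x\<bar> \<le> c"
  shows "0 \<le> (\<integral>x. indicator {x. 0 < birkhoff_max T f N x} x * f x \<partial>M)"
proof -
  let ?F = "birkhoff_max T f N"
  have "0 \<le> c" using bound[of undefined] by linarith
  have int_F: "integrable M ?F" and int_FT: "integrable M (\<lambda>x. ?F (T x))"
    by (auto intro!: integrable_const_bound[where B="N * c"] abs_birkhoff_max_le bound)
  have "integrable M (\<lambda>x. indicator {x. 0 < ?F x} x * f x)"
    using bound \<open>0 \<le> c\<close> by (intro integrable_const_bound[where B=c]) (auto simp: indicator_def)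
  then have "(\<integral>x. ?F x - ?F (T x) \<partial>M) \<le> (\<integral>x. indicator {x. 0 < ?F x} x * f x \<partial>M)"
    using int_F int_FT birkhoff_max_shift_le by (intro integral_mono) auto
  moreover have "(\<integral>x. ?F x - ?F (T x) \<partial>M) = 0"
    using int_F int_FT by (simp add: integral_comp_T)
  ultimately show ?thesis by simp
qed

theorem maximal_ergodic_inequality:
  assumes [measurable]: "f \<in> borel_measurable M" and bound: "\<And>x. \<bar>f x\<bar> \<le> c"
  shows "0 \<le> (\<integral>x. indicator {x. \<exists>k. 0 < birkhoff_sum T f k x} x * f x \<partial>M)"
proof -
  let ?P = "\<lambda>N x. 0 < birkhoff_max T f N x"
  have "0 \<le> c" using bound[of undefined] by linarith
  have "(\<lambda>N. indicator {x. ?P N x} x * f x) \<longlonglongrightarrow> indicator {x. \<exists>k. 0 < birkhoff_sum T f k x} x * f x"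
    for x
  proof (cases "\<exists>k. 0 < birkhoff_sum T f k x")
    case True
    then obtain k where "0 < birkhoff_sum T f k x" by blast
    then have "\<forall>N\<ge>k. ?P N x"
      using birkhoff_sum_le_max[of k _ T f x] by fastforce
    then show ?thesis
      using True by (intro tendsto_eventually) (auto simp: eventually_sequentially indicator_def)
  next
    case False
    then have "\<not> ?P N x" for N
      using birkhoff_max_attained[of N T f x] by (metis not_le)
    then show ?thesis using False by (simp add: indicator_def)
  qed
  then have "(\<lambda>N. \<integral>x. indicator {x. ?P N x} x * f x \<partial>M)
      \<longlonglongrightarrow> (\<integral>x. indicator {x. \<exists>k. 0 < birkhoff_sum T f k x} x * f x \<partial>M)"
    using bound \<open>0 \<le> c\<close>
    by (intro integral_dominated_convergence[where w="\<lambda>_. c"]) (auto simp: indicator_def)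
  then show ?thesis
    using maximal_ergodic_inequality_finite[OF assms] by (intro LIMSEQ_le_const) auto
qed

lemma birkhoff_exceed_measurable:
  assumes [measurable]: "f \<in> borel_measurable M"
  shows "birkhoff_exceed T f c \<in> sets M"
proof -
  have "birkhoff_exceed T f c = {x \<in> space M. \<exists>j::nat. \<forall>m. \<exists>n\<ge>m.
      (c + 1 / Suc j) * n < birkhoff_sum T f n x}"
    by (simp add: birkhoff_exceed_def frequently_sequentially space_eq)
  also have "\<dots> \<in> sets M" by measurable
  finally show ?thesis .
qed

lemma birkhoff_exceed_null:
  assumes [measurable]: "f \<in> borel_measurable M" and bound: "\<And>x. \<bar>f x\<bar> \<le> K"
    and "expectation f < c"
  shows "measure M (birkhoff_exceed T f c) = 0"
proof (rule ccontr)
  let ?D = "birkhoff_exceed T f c" and ?h = "\<lambda>x. f x - c"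
  assume "measure M ?D \<noteq> 0"
  moreover have "T -` ?D = ?D"
    using bound by (rule birkhoff_exceed_invariant)
  ultimately have "measure M ?D = 1"
    using invariant_set_trivial[OF birkhoff_exceed_measurable[OF assms(1)]] by blast
  then have "AE x in M. x \<in> ?D"
    by (rule AE_prob_1)
  moreover have "\<exists>k. 0 < birkhoff_sum T ?h k x" if "x \<in> ?D" for x
  proof -
    from that obtain j n where "(c + 1 / Suc j) * n < birkhoff_sum T f n x"
      unfolding birkhoff_exceed_def by (auto dest: frequently_ex)
    moreover have "c * n \<le> (c + 1 / Suc j) * n"
      by (intro mult_right_mono) auto
    ultimately have "0 < birkhoff_sum T ?h n x"
      by (simp add: birkhoff_sum_diff_const)
    then show ?thesis ..
  qed
  ultimately have "AE x in M. indicator {x. \<exists>k. 0 < birkhoff_sum T ?h k x} x * ?h x = ?h x"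
    by (auto simp: indicator_def elim!: AE_mp)
  then have "(\<integral>x. indicator {x. \<exists>k. 0 < birkhoff_sum T ?h k x} x * ?h x \<partial>M) = (\<integral>x. ?h x \<partial>M)"
    by (intro integral_cong_AE) auto
  also have "\<dots> = expectation f - c"
    using bound by (simp add: prob_space integrable_const_bound[where B=K])
  moreover have "\<bar>?h x\<bar> \<le> \<bar>K\<bar> + \<bar>c\<bar>" for x
    using bound[of x] by linarith
  ultimately have "0 \<le> expectation f - c"
    using maximal_ergodic_inequality[of ?h] by fastforce
  then show False using \<open>expectation f < c\<close> by simp
qed

lemma birkhoff_average_limsup_le:
  assumes [measurable]: "f \<in> borel_measurable M" and bound: "\<And>x. \<bar>f x\<bar> \<le> K"
  shows "AE x in M. \<forall>e>0. \<forall>\<^sub>F n in sequentially. birkhoff_sum T f n x / n < expectation f + e"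
proof -
  let ?a = "expectation f"
  have "AE x in M. x \<notin> birkhoff_exceed T f (?a + 1 / Suc i)" for i
    using birkhoff_exceed_null[OF assms, of "?a + 1 / Suc i"] birkhoff_exceed_measurable[OF assms(1)]
    by (intro AE_not_in) (simp add: emeasure_eq_measure null_setsI)
  then have "AE x in M. \<forall>i. x \<notin> birkhoff_exceed T f (?a + 1 / Suc i)"
    by (simp add: AE_all_countable)
  then show ?thesis
  proof eventually_elim
    case (elim x)
    show ?case
    proof (intro allI impI)
      fix e :: real assume "0 < e"
      then obtain i where "inverse (real (Suc i)) < e / 2"
        using reals_Archimedean[of "e / 2"] by auto
      moreover have "2 / real (Suc i) = 2 * inverse (real (Suc i))"
        by (simp add: divide_inverse)
      ultimately have small: "2 / real (Suc i) < e"
        by linarith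
      from elim have "\<not> (\<exists>\<^sub>F n in sequentially. (?a + 1 / Suc i + 1 / Suc i) * n < birkhoff_sum T f n x)"
        unfolding birkhoff_exceed_def by blast
      then have "\<forall>\<^sub>F n in sequentially. birkhoff_sum T f n x \<le> (?a + 2 / Suc i) * n"
        unfolding not_frequently by (rule eventually_mono) (simp add: not_less add.commute)
      moreover have "\<forall>\<^sub>F n in sequentially. 0 < n"
        by (rule eventually_gt_at_top)
      ultimately show "\<forall>\<^sub>F n in sequentially. birkhoff_sum T f n x / n < ?a + e"
      proof eventually_elim
        case (elim n)
        then have "birkhoff_sum T f n x / n \<le> ?a + 2 / Suc i"
          by (simp add: divide_le_eq)
        with small show ?case by linarith
      qed
    qed
  qed
qed

theorem birkhoff_ergodic:
  assumes [measurable]: "f \<in> borel_measurable M" and bound: "\<And>x. \<bar>f x\<bar> \<le> K"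
  shows "AE x in M. (\<lambda>n. birkhoff_sum T f n x / n) \<longlonglongrightarrow> expectation f"
proof -
  have "AE x in M. \<forall>e>0. \<forall>\<^sub>F n in sequentially.
      birkhoff_sum T (\<lambda>x. - f x) n x / n < expectation (\<lambda>x. - f x) + e"
    using bound by (intro birkhoff_average_limsup_le) auto
  then have lower: "AE x in M. \<forall>e>0. \<forall>\<^sub>F n in sequentially.
      expectation f - e < birkhoff_sum T f n x / n"
  proof eventually_elim
    case (elim x)
    show ?case
    proof (intro allI impI)
      fix e :: real assume "0 < e"
      with elim have "\<forall>\<^sub>F n in sequentially. - (birkhoff_sum T f n x / n) < - expectation f + e"
        by (simp add: birkhoff_sum_uminus)
      then show "\<forall>\<^sub>F n in sequentially. expectation f - e < birkhoff_sum T f n x / n"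
        by (rule eventually_mono) linarith
    qed
  qed
  with birkhoff_average_limsup_le[OF assms] show ?thesis
  proof eventually_elim
    case (elim x)
    show ?case
    proof (rule order_tendstoI)
      fix y assume "expectation f < y"
      then show "\<forall>\<^sub>F n in sequentially. birkhoff_sum T f n x / n < y"
        using elim(1)[rule_format, of "y - expectation f"] by simp
    next
      fix y assume "y < expectation f"
      then show "\<forall>\<^sub>F n in sequentially. y < birkhoff_sum T f n x / n"
        using elim(2)[rule_format, of "expectation f - y"] by simp
    qed
  qed
qed

end

section \<open>Two-by-two matrices\<close>

lemma mat2_eq_iff:
  "(A :: 'a^2^2) = B \<longleftrightarrow> A$1$1 = B$1$1 \<and> A$1$2 = B$1$2 \<and> A$2$1 = B$2$1 \<and> A$2$2 = B$2$2"
  by (auto simp: vec_eq_iff forall_2)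

lemma vec2_eq_iff: "(z :: 'a^2) = y \<longleftrightarrow> z$1 = y$1 \<and> z$2 = y$2"
  by (auto simp: vec_eq_iff forall_2)

lemma matrix_mult_2_nth:
  "((A :: 'a::comm_semiring_1^2^2) ** B) $ i $ j = A$i$1 * B$1$j + A$i$2 * B$2$j"
  by (simp add: matrix_matrix_mult_def sum_2)

lemma matrix_vector_mult_2_nth:
  "((A :: 'a::comm_semiring_1^2^2) *v z) $ i = A$i$1 * z$1 + A$i$2 * z$2"
  by (simp add: matrix_vector_mult_def sum_2)

lemma norm_vec2: "norm (z :: real^2) = sqrt ((z$1)\<^sup>2 + (z$2)\<^sup>2)"
  by (simp add: norm_vec_def L2_set_def sum_2)

lemma norm_vec2_le: "norm (z :: real^2) \<le> \<bar>z$1\<bar> + \<bar>z$2\<bar>"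
proof -
  have "(z$1)\<^sup>2 + (z$2)\<^sup>2 \<le> (\<bar>z$1\<bar> + \<bar>z$2\<bar>)\<^sup>2"
    by (simp add: power2_eq_square algebra_simps)
  then show ?thesis
    unfolding norm_vec2 by (intro real_le_lsqrt) auto
qed

definition cross2 :: "real^2 \<Rightarrow> real^2 \<Rightarrow> real" where
  "cross2 p q = p$1 * q$2 - p$2 * q$1"

lemma abs_cross2_le: "\<bar>cross2 p q\<bar> \<le> norm p * norm q"
proof -
  have "(cross2 p q)\<^sup>2 + (p$1 * q$1 + p$2 * q$2)\<^sup>2 = ((p$1)\<^sup>2 + (p$2)\<^sup>2) * ((q$1)\<^sup>2 + (q$2)\<^sup>2)"
    by (simp add: cross2_def power2_eq_square algebra_simps)
  then have "(cross2 p q)\<^sup>2 \<le> ((p$1)\<^sup>2 + (p$2)\<^sup>2) * ((q$1)\<^sup>2 + (q$2)\<^sup>2)"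
    by (metis le_add_same_cancel1 zero_le_power2)
  then show ?thesis
    unfolding norm_vec2 by (metis real_sqrt_abs real_sqrt_le_mono real_sqrt_mult)
qed

lemma cross2_expansion:
  assumes "cross2 p q \<noteq> 0"
  shows "z = (cross2 z q / cross2 p q) *\<^sub>R p + (cross2 p z / cross2 p q) *\<^sub>R q"
proof -
  have "cross2 z q * p$i + cross2 p z * q$i = cross2 p q * z$i" for i
    using exhaust_2[of i] by (auto simp: cross2_def algebra_simps)
  from this[of 1] this[of 2] show ?thesis
    using assms unfolding vec2_eq_iff by (simp add: field_simps)
qed

lemma norm_mult_le_mnorm: "norm (A *v z) \<le> mnorm A * norm z"
  unfolding mnorm_def by (rule onorm) simp

lemma mnorm_nonneg: "0 \<le> mnorm A"
  unfolding mnorm_def by (rule onorm_pos_le) simp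

lemma mnorm_le: "(\<And>z. norm (A *v z) \<le> b * norm z) \<Longrightarrow> mnorm A \<le> b"
  unfolding mnorm_def by (rule onorm_le)

lemma mnorm_matrix_mult_le: "mnorm (A ** B) \<le> mnorm A * mnorm B"
proof -
  have "onorm ((\<lambda>v. A *v v) \<circ> (\<lambda>v. B *v v)) \<le> onorm (\<lambda>v. A *v v) * onorm (\<lambda>v. B *v v)"
    by (rule onorm_compose) simp_all
  then show ?thesis
    by (simp add: mnorm_def o_def matrix_vector_mul_assoc)
qed

lemma mnorm_mat1_le: "mnorm (mat 1) \<le> 1"
  by (rule mnorm_le) simp

definition entry_sum :: "real^2^2 \<Rightarrow> real" where
  "entry_sum A = \<bar>A$1$1\<bar> + \<bar>A$1$2\<bar> + \<bar>A$2$1\<bar> + \<bar>A$2$2\<bar>"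

lemma mnorm_le_entry_sum: "mnorm A \<le> entry_sum A"
proof (rule mnorm_le)
  fix z :: "real^2"
  have "norm (A *v z) \<le> \<bar>(A *v z)$1\<bar> + \<bar>(A *v z)$2\<bar>"
    by (rule norm_vec2_le)
  also have "\<dots> \<le> (\<bar>A$1$1\<bar> * \<bar>z$1\<bar> + \<bar>A$1$2\<bar> * \<bar>z$2\<bar>) + (\<bar>A$2$1\<bar> * \<bar>z$1\<bar> + \<bar>A$2$2\<bar> * \<bar>z$2\<bar>)"
    unfolding matrix_vector_mult_2_nth by (intro add_mono) (simp_all add: abs_mult[symmetric] abs_triangle_ineq)
  also have "\<dots> \<le> (\<bar>A$1$1\<bar> * norm z + \<bar>A$1$2\<bar> * norm z) + (\<bar>A$2$1\<bar> * norm z + \<bar>A$2$2\<bar> * norm z)"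
    by (intro add_mono mult_left_mono component_le_norm_cart) auto
  finally show "norm (A *v z) \<le> entry_sum A * norm z"
    by (simp add: entry_sum_def algebra_simps)
qed

lemma abs_entry_le_mnorm: "\<bar>A$i$j\<bar> \<le> mnorm A"
proof -
  have "(A *v axis j 1) $ i = A$i$j"
    using exhaust_2[of i] exhaust_2[of j] by (auto simp: matrix_vector_mult_2_nth axis_def)
  then have "\<bar>A$i$j\<bar> \<le> norm (A *v axis j 1)"
    by (metis component_le_norm_cart)
  also have "\<dots> \<le> mnorm A"
    using norm_mult_le_mnorm[of A "axis j 1"] by simp
  finally show ?thesis .
qed

lemma entry_sum_le_mnorm: "entry_sum A \<le> 4 * mnorm A"
  using abs_entry_le_mnorm[of A 1 1] abs_entry_le_mnorm[of A 1 2]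
    abs_entry_le_mnorm[of A 2 1] abs_entry_le_mnorm[of A 2 2]
  by (simp add: entry_sum_def)

lemma mnorm_pos:
  assumes "det A \<noteq> 0"
  shows "0 < mnorm A"
proof -
  have "\<exists>i j. A$i$j \<noteq> 0"
  proof (rule ccontr)
    assume "\<not> ?thesis"
    then have "det A = 0" by (simp add: det_2)
    with assms show False ..
  qed
  then obtain i j where "A$i$j \<noteq> 0" by blast
  then show ?thesis
    using abs_entry_le_mnorm[of A i j] by simp
qed

lemma matrix_inv_inverse:
  "invertible A \<Longrightarrow> A ** matrix_inv A = mat 1 \<and> matrix_inv A ** A = mat 1"
  unfolding invertible_def matrix_inv_def by (rule someI_ex)

lemma matrix_inv_eqI:
  fixes A B :: "'a::comm_ring_1^'n^'n"
  assumes "A ** B = mat 1" "B ** A = mat 1"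
  shows "matrix_inv A = B"
proof -
  have "matrix_inv A ** A = mat 1"
    using assms matrix_inv_inverse unfolding invertible_def by blast
  have "matrix_inv A = matrix_inv A ** (A ** B)"
    by (simp add: assms(1))
  also have "\<dots> = B"
    by (simp add: matrix_mul_assoc \<open>matrix_inv A ** A = mat 1\<close>)
  finally show ?thesis .
qed

lemma matrix_inv_matrix_mul:
  fixes A B :: "'a::comm_ring_1^'n^'n"
  assumes "invertible A" "invertible B"
  shows "matrix_inv (A ** B) = matrix_inv B ** matrix_inv A"
proof (rule matrix_inv_eqI)
  have "A ** B ** (matrix_inv B ** matrix_inv A) = A ** (B ** matrix_inv B) ** matrix_inv A"
    and "matrix_inv B ** matrix_inv A ** (A ** B) = matrix_inv B ** (matrix_inv A ** A) ** B"
    by (simp_all add: matrix_mul_assoc)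
  then show "A ** B ** (matrix_inv B ** matrix_inv A) = mat 1"
    and "matrix_inv B ** matrix_inv A ** (A ** B) = mat 1"
    using matrix_inv_inverse[OF assms(1)] matrix_inv_inverse[OF assms(2)] by simp_all
qed

lemma matrix_inv_mat1: "matrix_inv (mat 1 :: 'a::comm_ring_1^'n^'n) = mat 1"
  by (rule matrix_inv_eqI) simp_all

lemma matrix_inv_2:
  fixes A :: "real^2^2"
  assumes "det A \<noteq> 0"
  shows "matrix_inv A = (\<chi> i j. (if i = 1 then (if j = 1 then A$2$2 else - A$1$2)
                                     else (if j = 1 then - A$2$1 else A$1$1)) / det A)"
proof (rule matrix_inv_eqI)
  have d: "A$1$1 * A$2$2 - A$1$2 * A$2$1 = det A"
    by (simp add: det_2)
  show "A ** (\<chi> i j. (if i = 1 then (if j = 1 then A$2$2 else - A$1$2)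
                      else (if j = 1 then - A$2$1 else A$1$1)) / det A) = mat 1"
    using assms d unfolding mat2_eq_iff matrix_mult_2_nth
    by (simp add: mat_def field_simps)
  show "(\<chi> i j. (if i = 1 then (if j = 1 then A$2$2 else - A$1$2)
                 else (if j = 1 then - A$2$1 else A$1$1)) / det A) ** A = mat 1"
    using assms d unfolding mat2_eq_iff matrix_mult_2_nth
    by (simp add: mat_def field_simps)
qed

lemma entry_sum_matrix_inv: "0 < det A \<Longrightarrow> entry_sum (matrix_inv A) = entry_sum A / det A"
  by (simp add: matrix_inv_2 entry_sum_def abs_divide add_divide_distrib)

lemma abs_ln_diff_le:
  fixes a b K L :: real
  assumes "0 < b" "1 \<le> K" and lower: "b / K \<le> a" and upper: "a \<le> L * b"
  shows "\<bar>ln a - ln b\<bar> \<le> \<bar>ln L\<bar> + ln K"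
proof -
  have "0 < b / K"
    using assms by simp
  then have "0 < a" "0 < L * b"
    using lower upper by linarith+
  then have "0 < L"
    using zero_less_mult_pos2[of L b] \<open>0 < b\<close> by blast
  have "ln (b / K) \<le> ln a"
    using lower \<open>0 < b / K\<close> by simp
  then have "ln b - ln K \<le> ln a"
    using assms by (simp add: ln_div)
  moreover have "ln a \<le> ln (L * b)"
    using upper \<open>0 < a\<close> by simp
  then have "ln a \<le> ln L + ln b"
    using ln_mult_pos[OF \<open>0 < L\<close> \<open>0 < b\<close>] by linarith
  ultimately show ?thesis
    unfolding abs_le_iff using ln_ge_zero[OF \<open>1 \<le> K\<close>] abs_ge_self[of "ln L"] by linarith
qed

lemma ln_inverse_mnorm_matrix_inv:
  assumes "0 < det A"
  shows "\<bar>ln (inverse (mnorm (matrix_inv A))) - (ln (det A) - ln (mnorm A))\<bar> \<le> ln 4"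
proof -
  have "det A * det (matrix_inv A) = 1"
    using matrix_inv_inverse[of A] assms by (simp add: invertible_det_nz det_mul[symmetric])
  then have "det (matrix_inv A) \<noteq> 0" by auto
  then have pos: "0 < mnorm A" "0 < mnorm (matrix_inv A)"
    using assms by (simp_all add: mnorm_pos)
  have "entry_sum A / det A \<le> 4 * mnorm A / det A" "mnorm A / det A \<le> entry_sum A / det A"
    using entry_sum_le_mnorm[of A] mnorm_le_entry_sum[of A] assms
    by (simp_all add: divide_right_mono)
  then have "mnorm (matrix_inv A) \<le> 4 * mnorm A / det A" and "mnorm A / det A \<le> 4 * mnorm (matrix_inv A)"
    using mnorm_le_entry_sum[of "matrix_inv A"] entry_sum_le_mnorm[of "matrix_inv A"]
      entry_sum_matrix_inv[OF assms]
    by linarith+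
  then have "ln (mnorm (matrix_inv A)) \<le> ln (4 * mnorm A / det A)"
    and "ln (mnorm A / det A) \<le> ln (4 * mnorm (matrix_inv A))"
    using pos assms by simp_all
  then show ?thesis
    using pos assms by (simp add: ln_div ln_mult ln_inverse abs_le_iff)
qed

definition stretch :: "real^2^2 \<Rightarrow> real^2 \<Rightarrow> real" where
  "stretch A z = norm (A *v z) / norm z"

lemma stretch_nonneg: "0 \<le> stretch A z"
  by (simp add: stretch_def)

lemma stretch_le_mnorm: "stretch A z \<le> mnorm A"
  using norm_mult_le_mnorm[of A z] mnorm_nonneg[of A]
  by (cases "z = 0") (simp_all add: stretch_def divide_le_eq mult.commute)

lemma stretch_matrix_mult:
  assumes "B *v z = k *\<^sub>R z'" "z \<noteq> 0" "z' \<noteq> 0"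
  shows "stretch (A ** B) z = stretch A z' * stretch B z"
  using assms by (simp add: stretch_def matrix_vector_mul_assoc[symmetric] matrix_vector_mult_scaleR)

lemma restr_norm_span_singleton:
  assumes "w \<noteq> 0"
  shows "restr_norm A (span {w}) = stretch A w"
proof -
  have "{norm (A *v v) | v. v \<in> span {w} \<and> norm v = 1} = {stretch A w}"
  proof (intro set_eqI iffI)
    fix r assume "r \<in> {norm (A *v v) | v. v \<in> span {w} \<and> norm v = 1}"
    then obtain k where "r = norm (A *v (k *\<^sub>R w))" "norm (k *\<^sub>R w) = 1"
      by (auto simp: span_singleton)
    then show "r \<in> {stretch A w}"
      using assms by (auto simp: stretch_def matrix_vector_mult_scaleR field_simps)
  next
    fix r assume "r \<in> {stretch A w}"
    then have "r = norm (A *v ((1 / norm w) *\<^sub>R w)) \<and> (1 / norm w) *\<^sub>R w \<in> span {w}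
        \<and> norm ((1 / norm w) *\<^sub>R w) = 1"
      using assms by (auto simp: stretch_def matrix_vector_mult_scaleR span_singleton)
    then show "r \<in> {norm (A *v v) | v. v \<in> span {w} \<and> norm v = 1}" by blast
  qed
  then show ?thesis by (simp add: restr_norm_def)
qed

text \<open>\<open>\<bar>cross2 p q\<bar> / (\<parallel>p\<parallel> \<parallel>q\<parallel>)\<close> is the sine of the angle between \<open>p\<close> and \<open>q\<close>.\<close>
lemma mnorm_le_stretch_sum:
  assumes "p \<noteq> 0" "q \<noteq> 0" "0 < \<delta>" and angle: "\<delta> * (norm p * norm q) \<le> \<bar>cross2 p q\<bar>"
  shows "mnorm A \<le> (stretch A p + stretch A q) / \<delta>"
proof (rule mnorm_le)
  fix z :: "real^2"
  have "cross2 p q \<noteq> 0"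
    using assms by (smt (verit) mult_pos_pos zero_less_norm_iff)
  define a b where "a = cross2 z q / cross2 p q" and "b = cross2 p z / cross2 p q"
  have "A *v z = a *\<^sub>R (A *v p) + b *\<^sub>R (A *v q)"
    using cross2_expansion[OF \<open>cross2 p q \<noteq> 0\<close>, of z]
    by (metis a_def b_def matrix_vector_mult_scaleR matrix_vector_right_distrib)
  then have triangle: "norm (A *v z) \<le> \<bar>a\<bar> * norm (A *v p) + \<bar>b\<bar> * norm (A *v q)"
    by (metis norm_scaleR norm_triangle_ineq)
  have "\<delta> * norm p * \<bar>cross2 z q\<bar> \<le> norm z * \<bar>cross2 p q\<bar>"
    and "\<delta> * norm q * \<bar>cross2 p z\<bar> \<le> norm z * \<bar>cross2 p q\<bar>"
  proof -
    have "\<delta> * norm p * \<bar>cross2 z q\<bar> \<le> \<delta> * norm p * (norm z * norm q)"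
      and "\<delta> * norm q * \<bar>cross2 p z\<bar> \<le> \<delta> * norm q * (norm p * norm z)"
      using abs_cross2_le \<open>0 < \<delta>\<close> by (simp_all add: mult_left_mono)
    moreover have "norm z * (\<delta> * (norm p * norm q)) \<le> norm z * \<bar>cross2 p q\<bar>"
      using angle by (simp add: mult_left_mono)
    ultimately show "\<delta> * norm p * \<bar>cross2 z q\<bar> \<le> norm z * \<bar>cross2 p q\<bar>"
      and "\<delta> * norm q * \<bar>cross2 p z\<bar> \<le> norm z * \<bar>cross2 p q\<bar>"
      by (simp_all add: ac_simps)
  qed
  moreover have "0 < \<bar>cross2 p q\<bar>" "0 < norm p" "0 < norm q"
    using \<open>cross2 p q \<noteq> 0\<close> assms(1,2) by simp_all
  ultimately have "\<bar>a\<bar> \<le> norm z / (\<delta> * norm p)" and "\<bar>b\<bar> \<le> norm z / (\<delta> * norm q)"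
    using \<open>0 < \<delta>\<close> by (simp_all add: a_def b_def abs_divide field_simps)
  with triangle have "norm (A *v z) \<le> norm z / (\<delta> * norm p) * norm (A *v p) + norm z / (\<delta> * norm q) * norm (A *v q)"
    by (smt (verit) mult_right_mono norm_ge_zero)
  also have "\<dots> = (stretch A p + stretch A q) / \<delta> * norm z"
    by (simp add: stretch_def add_divide_distrib distrib_left distrib_right ac_simps)
  finally show "norm (A *v z) \<le> (stretch A p + stretch A q) / \<delta> * norm z" .
qed

section \<open>Matrix cocycles\<close>

lemma cocyc_add: "cocyc T B (n + m) x = cocyc T B m ((T ^^ n) x) ** cocyc T B n x"
proof (induction m)
  case (Suc m)
  have "(T ^^ (n + m)) x = (T ^^ m) ((T ^^ n) x)"
    by (metis add.commute comp_apply funpow_add)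
  with Suc show ?case by (simp add: matrix_mul_assoc)
qed simp

lemma cocyc_Suc_right: "cocyc T B (Suc n) x = cocyc T B n (T x) ** B x"
  using cocyc_add[of T B 1 n x] by simp

lemma det_cocyc: "det (cocyc T B n x) = (\<Prod>k<n. det (B ((T ^^ k) x)))"
  by (induction n) (simp_all add: det_mul)

lemma mnorm_cocyc_le_power:
  assumes "0 \<le> b" "\<And>x. mnorm (B x) \<le> b"
  shows "mnorm (cocyc T B n x) \<le> b ^ n"
  by (induction n) (auto intro!: order_trans[OF mnorm_matrix_mult_le] mult_mono assms
      simp: mnorm_mat1_le mnorm_nonneg)

lemma cocyc_inv_eq_matrix_inv:
  assumes "bij T" and det_nz: "\<And>x. det (B x) \<noteq> 0"
  shows "cocyc_inv T B n x = matrix_inv (cocyc T B n ((inv T ^^ n) x))"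
proof (induction n arbitrary: x)
  case 0
  show ?case by (simp add: matrix_inv_mat1)
next
  case (Suc n)
  let ?y = "(inv T ^^ Suc n) x"
  have "T ?y = (inv T ^^ n) x"
    using funpow_funpow_inv[OF assms(1), of 1 "Suc n"] by simp
  moreover have "invertible (cocyc T B n z)" "invertible (B z)" for z
    using det_nz by (simp_all add: invertible_det_nz det_cocyc)
  ultimately have "cocyc_inv T B (Suc n) x = matrix_inv (cocyc T B n (T ?y) ** B ?y)"
    by (simp only: cocyc_inv.simps Suc.IH matrix_inv_matrix_mul)
  then show ?case
    by (simp only: cocyc_Suc_right)
qed

lemma average_limit_bounded_perturb:
  fixes s t :: "nat \<Rightarrow> real"
  assumes "(\<lambda>n. s n / n) \<longlonglongrightarrow> a" and close: "\<And>n. \<bar>t n - s n\<bar> \<le> C"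
  shows "(\<lambda>n. t n / n) \<longlonglongrightarrow> a"
proof -
  have "(\<lambda>n. (t n - s n) / n) \<longlonglongrightarrow> 0"
  proof (rule Lim_null_comparison)
    show "\<forall>\<^sub>F n in sequentially. norm ((t n - s n) / n) \<le> C / n"
      using close by (intro always_eventually allI) (simp add: abs_divide divide_right_mono)
  qed (rule lim_const_over_n)
  from tendsto_add[OF assms(1) this] show ?thesis
    by (simp add: diff_divide_distrib)
qed

lemma (in prob_space) the_AE_limit_eq:
  fixes X :: "'a \<Rightarrow> nat \<Rightarrow> real"
  assumes "AE x in M. X x \<longlonglongrightarrow> a"
  shows "(THE c. AE x in M. X x \<longlonglongrightarrow> c) = a"
proof (rule the_equality)
  fix c assume "AE x in M. X x \<longlonglongrightarrow> c"
  with assms have "AE x in M. c = a"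
    by eventually_elim (metis LIMSEQ_unique)
  then show "c = a" by simp
qed (rule assms)

section \<open>Cocycles with an invariant graph direction\<close>

locale graph_dominated_cocycle = ergodic_system M T
  for M :: "'a::metric_space measure" and T +
  fixes B :: "'a \<Rightarrow> real^2^2" and w :: "'a \<Rightarrow> real" and E :: "'a \<Rightarrow> (real^2) set"
  assumes compact_space: "compact (UNIV :: 'a set)"
    and bij_T: "bij T" and continuous_inv_T: "continuous_on UNIV (inv T)"
    and sets_M: "sets M = sets borel"
    and continuous_B: "\<And>i j. continuous_on UNIV (\<lambda>x. B x $ i $ j)"
    and det_pos: "\<And>x. 0 < det (B x)"
    and continuous_w: "continuous_on UNIV w"
    and splitting: "dominated_splitting T B E (\<lambda>x. span {vector [w x, 1]})"
    and graph_growth_pos: "\<And>x. 0 < B x $ 2 $ 1 * w x + B x $ 2 $ 2"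
begin

lemma continuous_bounded:
  assumes "continuous_on UNIV (f :: 'a \<Rightarrow> real)"
  shows "\<exists>b. \<forall>x. \<bar>f x\<bar> \<le> b"
proof -
  have "bounded (range f)"
    by (rule compact_imp_bounded[OF compact_continuous_image[OF assms compact_space]])
  then show ?thesis by (auto simp: bounded_iff)
qed

lemma continuous_pos_bounded_below:
  assumes "continuous_on UNIV (f :: 'a \<Rightarrow> real)" "\<And>x. 0 < f x"
  shows "\<exists>m>0. \<forall>x. m \<le> f x"
  using continuous_attains_inf[OF compact_space _ assms(1)] assms(2) by blast

lemma continuous_measurable: "continuous_on UNIV (f :: 'a \<Rightarrow> real) \<Longrightarrow> f \<in> borel_measurable M"
  using borel_measurable_continuous_onI measurable_cong_sets[OF sets_M refl] by blast

lemma continuous_integrable: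
  assumes "continuous_on UNIV (f :: 'a \<Rightarrow> real)"
  shows "integrable M f"
proof -
  obtain b where "\<And>x. \<bar>f x\<bar> \<le> b"
    using continuous_bounded[OF assms] by blast
  then show ?thesis
    using continuous_measurable[OF assms] by (intro integrable_const_bound[where B=b]) auto
qed

definition graph_vec :: "'a \<Rightarrow> real^2" where
  "graph_vec x = vector [w x, 1]"

definition growth :: "'a \<Rightarrow> real" where
  "growth x = B x $ 2 $ 1 * w x + B x $ 2 $ 2"

definition growth_prod :: "nat \<Rightarrow> 'a \<Rightarrow> real" where
  "growth_prod n x = (\<Prod>k<n. growth ((T ^^ k) x))"

lemma graph_vec_nth [simp]: "graph_vec x $ 1 = w x" "graph_vec x $ 2 = 1"
  by (simp_all add: graph_vec_def)

lemma graph_vec_nonzero: "graph_vec x \<noteq> 0"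
  by (metis graph_vec_nth(2) zero_index zero_neq_one)

lemma norm_graph_vec_ge: "1 \<le> norm (graph_vec x)"
  using component_le_norm_cart[of "graph_vec x" 2] by simp

lemma norm_graph_vec_bounded: "\<exists>K. \<forall>x. norm (graph_vec x) \<le> K"
proof -
  obtain b where "\<And>x. \<bar>w x\<bar> \<le> b"
    using continuous_bounded[OF continuous_w] by blast
  then have "norm (graph_vec x) \<le> b + 1" for x
    using norm_vec2_le[of "graph_vec x"] by (smt (verit) graph_vec_nth)
  then show ?thesis by blast
qed

lemma growth_pos: "0 < growth x"
  using graph_growth_pos by (simp add: growth_def)

lemma growth_prod_pos: "0 < growth_prod n x"
  by (simp add: growth_prod_def prod_pos growth_pos)

lemma continuous_growth: "continuous_on UNIV growth"
  unfolding growth_def[abs_def] by (intro continuous_intros continuous_B continuous_w)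

lemma continuous_ln_growth: "continuous_on UNIV (\<lambda>x. ln (growth x))"
  using growth_pos by (intro continuous_on_ln continuous_growth) (auto simp: less_imp_neq[symmetric])

lemma continuous_ln_det: "continuous_on UNIV (\<lambda>x. ln (det (B x)))"
  using det_pos unfolding det_2
  by (intro continuous_on_ln continuous_intros continuous_B) (auto simp: less_imp_neq[symmetric] det_2)

lemma B_graph_vec: "B x *v graph_vec x = growth x *\<^sub>R graph_vec (T x)"
proof -
  have "(\<lambda>z. B x *v z) ` span {graph_vec x} = span {graph_vec (T x)}"
    using splitting by (simp add: dominated_splitting_def graph_vec_def)
  then obtain k where k: "B x *v graph_vec x = k *\<^sub>R graph_vec (T x)"
    using span_base[of "graph_vec x" "{graph_vec x}"] by (auto simp: span_singleton)
  moreover have "(B x *v graph_vec x) $ 2 = growth x"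
    by (simp add: matrix_vector_mult_2_nth growth_def)
  ultimately show ?thesis by simp
qed

lemma cocyc_graph_vec: "cocyc T B n x *v graph_vec x = growth_prod n x *\<^sub>R graph_vec ((T ^^ n) x)"
  by (induction n)
    (simp_all add: growth_prod_def B_graph_vec matrix_vector_mul_assoc[symmetric] matrix_vector_mult_scaleR)

definition graph_stretch :: "nat \<Rightarrow> 'a \<Rightarrow> real" where
  "graph_stretch n x = stretch (cocyc T B n x) (graph_vec x)"

lemma graph_stretch_eq:
  "graph_stretch n x = growth_prod n x * norm (graph_vec ((T ^^ n) x)) / norm (graph_vec x)"
  using growth_prod_pos[of n x] by (simp add: graph_stretch_def stretch_def cocyc_graph_vec)

lemma graph_stretch_pos: "0 < graph_stretch n x"
  using growth_prod_pos[of n x] graph_vec_nonzero by (simp add: graph_stretch_eq)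

lemma graph_stretch_add: "graph_stretch (n + m) x = graph_stretch m ((T ^^ n) x) * graph_stretch n x"
  unfolding graph_stretch_def cocyc_add by (rule stretch_matrix_mult[OF cocyc_graph_vec graph_vec_nonzero graph_vec_nonzero])

lemma graph_stretch_comparable:
  "\<exists>K\<ge>1. \<forall>n x. growth_prod n x \<le> K * graph_stretch n x \<and> graph_stretch n x \<le> K * growth_prod n x"
proof -
  obtain K where K: "\<And>x. norm (graph_vec x) \<le> K"
    using norm_graph_vec_bounded by blast
  then have "1 \<le> K" using norm_graph_vec_ge order_trans by blast
  have "growth_prod n x \<le> K * graph_stretch n x \<and> graph_stretch n x \<le> K * growth_prod n x" for n x
  proof -
    let ?r = "norm (graph_vec ((T ^^ n) x)) / norm (graph_vec x)"
    have "?r \<le> norm (graph_vec ((T ^^ n) x)) / 1"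
      using norm_graph_vec_ge[of x] by (intro divide_left_mono) auto
    then have "?r \<le> K"
      using K[of "(T ^^ n) x"] by linarith
    have "1 / K \<le> 1 / norm (graph_vec x)"
      using K[of x] norm_graph_vec_ge[of x] by (intro divide_left_mono mult_pos_pos) linarith+
    also have "\<dots> \<le> ?r"
      using norm_graph_vec_ge[of "(T ^^ n) x"] norm_graph_vec_ge[of x] by (simp add: divide_right_mono)
    finally have "1 \<le> K * ?r"
      using \<open>1 \<le> K\<close> by (simp add: divide_le_eq mult.commute)
    have "graph_stretch n x = growth_prod n x * ?r"
      by (simp add: graph_stretch_eq)
    moreover have "growth_prod n x * 1 \<le> growth_prod n x * (K * ?r)"
      and "growth_prod n x * ?r \<le> growth_prod n x * K"
      using growth_prod_pos[of n x]
      by (intro mult_left_mono \<open>?r \<le> K\<close> \<open>1 \<le> K * ?r\<close>; simp)+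
    ultimately show ?thesis
      by (simp add: ac_simps)
  qed
  with \<open>1 \<le> K\<close> show ?thesis by blast
qed

lemma stable_vec_exists: "\<exists>z. z \<noteq> 0 \<and> E x = span {z}"
proof -
  have "continuous_line_field E"
    using splitting by (simp add: dominated_splitting_def)
  then show ?thesis
    unfolding continuous_line_field_def by blast
qed

definition stable_vec :: "'a \<Rightarrow> real^2" where
  "stable_vec x = (SOME z. z \<noteq> 0 \<and> E x = span {z})"

lemma stable_vec: "stable_vec x \<noteq> 0" "E x = span {stable_vec x}"
  using someI_ex[OF stable_vec_exists[of x]] unfolding stable_vec_def by blast+

lemma cocyc_stable_vec: "\<exists>k. cocyc T B n x *v stable_vec x = k *\<^sub>R stable_vec ((T ^^ n) x)"
proof (induction n)
  case (Suc n)
  then obtain k where k: "cocyc T B n x *v stable_vec x = k *\<^sub>R stable_vec ((T ^^ n) x)" ..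
  have "(\<lambda>z. B y *v z) ` E y = E (T y)" for y
    using splitting by (simp add: dominated_splitting_def)
  then obtain k' where "B ((T ^^ n) x) *v stable_vec ((T ^^ n) x) = k' *\<^sub>R stable_vec ((T ^^ Suc n) x)"
    using stable_vec(2) span_base[of "stable_vec ((T ^^ n) x)"]
    by (fastforce simp: span_singleton)
  with k show ?case
    by (auto simp: matrix_vector_mul_assoc[symmetric] matrix_vector_mult_scaleR)
qed (auto intro: exI[of _ 1])

definition stable_stretch :: "nat \<Rightarrow> 'a \<Rightarrow> real" where
  "stable_stretch n x = stretch (cocyc T B n x) (stable_vec x)"

lemma stable_stretch_add:
  "stable_stretch (n + m) x = stable_stretch m ((T ^^ n) x) * stable_stretch n x"
proof -
  obtain k where "cocyc T B n x *v stable_vec x = k *\<^sub>R stable_vec ((T ^^ n) x)"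
    using cocyc_stable_vec by blast
  then show ?thesis
    unfolding stable_stretch_def cocyc_add by (rule stretch_matrix_mult[OF _ stable_vec(1) stable_vec(1)])
qed

text \<open>This is where the domination hypothesis enters.\<close>
lemma stable_stretch_le_graph_stretch_at:
  "\<exists>l\<ge>1. \<forall>x. stable_stretch l x \<le> graph_stretch l x"
proof -
  obtain l :: nat where "1 \<le> l" and dom: "\<And>x. restr_norm (cocyc T B l x) (E x) *
      restr_norm (cocyc_inv T B l ((T ^^ l) x)) (span {graph_vec ((T ^^ l) x)}) < 1/2"
    using splitting by (auto simp: dominated_splitting_def graph_vec_def)
  have "stable_stretch l x \<le> graph_stretch l x" for x
  proof -
    let ?A = "cocyc T B l x"
    have "det ?A \<noteq> 0"
      using det_pos by (simp add: det_cocyc prod_pos less_imp_neq[symmetric])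
    have inv: "cocyc_inv T B l ((T ^^ l) x) = matrix_inv ?A"
      using det_pos inv_fn_o_fn_is_id[OF bij_T, of l]
      by (simp add: cocyc_inv_eq_matrix_inv[OF bij_T] less_imp_neq[symmetric] fun_eq_iff)
    have "matrix_inv ?A *v (?A *v graph_vec x) = graph_vec x"
      using matrix_inv_inverse[of ?A] \<open>det ?A \<noteq> 0\<close>
      by (simp add: invertible_det_nz matrix_vector_mul_assoc)
    then have "matrix_inv ?A *v graph_vec ((T ^^ l) x) = (1 / growth_prod l x) *\<^sub>R graph_vec x"
      using growth_prod_pos[of l x]
      by (simp add: cocyc_graph_vec matrix_vector_mult_scaleR field_simps vec_eq_iff)
    then have "restr_norm (matrix_inv ?A) (span {graph_vec ((T ^^ l) x)}) = 1 / graph_stretch l x"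
      using growth_prod_pos[of l x] graph_vec_nonzero
      by (simp add: restr_norm_span_singleton stretch_def graph_stretch_eq)
    moreover have "restr_norm ?A (E x) = stable_stretch l x"
      by (simp add: stable_vec restr_norm_span_singleton stable_stretch_def)
    ultimately have "stable_stretch l x * (1 / graph_stretch l x) < 1 / 2"
      using dom[of x] inv by simp
    then show ?thesis
      using graph_stretch_pos[of l x] by (simp add: field_simps)
  qed
  with \<open>1 \<le> l\<close> show ?thesis by blast
qed

lemma mnorm_B_bounded: "\<exists>b\<ge>0. \<forall>x. mnorm (B x) \<le> b"
proof -
  have "\<exists>b. \<forall>x. \<bar>B x $ i $ j\<bar> \<le> b" for i j
    using continuous_B by (rule continuous_bounded)
  then obtain b where "\<And>x i j. \<bar>B x $ i $ j\<bar> \<le> b i j"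
    by metis
  then have "mnorm (B x) \<le> b 1 1 + b 1 2 + b 2 1 + b 2 2" for x
    using mnorm_le_entry_sum[of "B x"] unfolding entry_sum_def by (smt (verit))
  then show ?thesis
    using mnorm_nonneg by (meson order_trans)
qed

lemma growth_prod_ge_power:
  assumes "0 < m" "\<And>x. m \<le> growth x"
  shows "m ^ n \<le> growth_prod n x"
proof (induction n)
  case (Suc n)
  have "m ^ n * m \<le> growth_prod n x * growth ((T ^^ n) x)"
    using Suc assms by (intro mult_mono) (auto simp: less_imp_le growth_prod_pos)
  then show ?case by (simp add: growth_prod_def mult.commute[of m])
qed (simp add: growth_prod_def)

lemma stable_stretch_le_graph_stretch_below:
  "\<exists>R\<ge>0. \<forall>n<l. \<forall>x. stable_stretch n x \<le> R * graph_stretch n x"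
proof -
  obtain b where "0 \<le> b" and b: "\<And>x. mnorm (B x) \<le> b"
    using mnorm_B_bounded by blast
  obtain m where "0 < m" and m: "\<And>x. m \<le> growth x"
    using continuous_pos_bounded_below[OF continuous_growth growth_pos] by blast
  obtain K where "1 \<le> K" and K: "\<And>n x. growth_prod n x \<le> K * graph_stretch n x"
    using graph_stretch_comparable by blast
  define R where "R = K * max 1 (b / m) ^ l"
  have "stable_stretch n x \<le> R * graph_stretch n x" if "n < l" for n x
  proof -
    have "stable_stretch n x \<le> b ^ n"
      using stretch_le_mnorm mnorm_cocyc_le_power[OF \<open>0 \<le> b\<close> b] unfolding stable_stretch_def
      by (rule order_trans)
    also have "\<dots> = (b / m) ^ n * m ^ n"
      using \<open>0 < m\<close> by (simp add: power_divide)
    also have "\<dots> \<le> max 1 (b / m) ^ l * growth_prod n x"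
    proof (rule mult_mono)
      have "(b / m) ^ n \<le> max 1 (b / m) ^ n"
        using \<open>0 \<le> b\<close> \<open>0 < m\<close> by (intro power_mono) auto
      also have "\<dots> \<le> max 1 (b / m) ^ l"
        using \<open>n < l\<close> by (intro power_increasing) auto
      finally show "(b / m) ^ n \<le> max 1 (b / m) ^ l" .
    qed (use growth_prod_ge_power[OF \<open>0 < m\<close> m] \<open>0 < m\<close> in auto)
    also have "\<dots> \<le> R * graph_stretch n x"
      using K[of n x] by (simp add: R_def mult.assoc mult_left_mono)
    finally show ?thesis .
  qed
  moreover have "0 \<le> R"
    using \<open>1 \<le> K\<close> by (simp add: R_def)
  ultimately show ?thesis by blast
qed

lemma stable_stretch_le_graph_stretch: "\<exists>R. \<forall>n x. stable_stretch n x \<le> R * graph_stretch n x"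
proof -
  obtain l where "1 \<le> l" and l: "\<And>x. stable_stretch l x \<le> graph_stretch l x"
    using stable_stretch_le_graph_stretch_at by blast
  obtain R where "0 \<le> R" and below: "\<And>n x. n < l \<Longrightarrow> stable_stretch n x \<le> R * graph_stretch n x"
    using stable_stretch_le_graph_stretch_below by blast
  have "stable_stretch n x \<le> R * graph_stretch n x" for n x
  proof (induction n arbitrary: x rule: less_induct)
    case (less n)
    show ?case
    proof (cases "n < l")
      case False
      define n' where "n' = n - l"
      have n: "n = l + n'" "n' < n"
        using False \<open>1 \<le> l\<close> by (auto simp: n'_def)
      have "stable_stretch n x = stable_stretch n' ((T ^^ l) x) * stable_stretch l x"
        by (simp add: n stable_stretch_add)
      also have "\<dots> \<le> R * graph_stretch n' ((T ^^ l) x) * graph_stretch l x"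
        using less.IH[OF n(2)] l[of x] \<open>0 \<le> R\<close> graph_stretch_pos
        by (intro mult_mono) (auto simp: stable_stretch_def stretch_nonneg less_imp_le)
      finally show ?thesis
        by (simp add: n graph_stretch_add mult.assoc)
    qed (rule below)
  qed
  then show ?thesis by blast
qed

definition sin_angle :: "'a \<Rightarrow> real" where
  "sin_angle x = \<bar>cross2 (stable_vec x) (graph_vec x)\<bar> / (norm (stable_vec x) * norm (graph_vec x))"

lemma cross2_stable_graph_nonzero: "cross2 (stable_vec x) (graph_vec x) \<noteq> 0"
proof
  assume "cross2 (stable_vec x) (graph_vec x) = 0"
  then have "stable_vec x = (stable_vec x $ 2) *\<^sub>R graph_vec x"
    by (simp add: cross2_def vec2_eq_iff)
  then have "stable_vec x \<in> E x \<inter> span {graph_vec x}"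
    using stable_vec(2) by (metis IntI span_base span_mul singletonI scaleR_conv_of_real)
  moreover have "E x \<inter> span {graph_vec x} = {0}"
    using splitting by (simp add: dominated_splitting_def graph_vec_def)
  ultimately show False
    using stable_vec(1) by blast
qed

lemma sin_angle_pos: "0 < sin_angle x"
  using cross2_stable_graph_nonzero[of x] stable_vec(1) graph_vec_nonzero
  by (simp add: sin_angle_def)

text \<open>\<open>sin_angle\<close> does not depend on the choice of \<open>stable_vec\<close>; near each point it is a
  continuous expression in a continuous local spanning field of \<open>E\<close>.\<close>
lemma continuous_sin_angle: "continuous_on UNIV sin_angle"
proof -
  have "isCont sin_angle x" for x
  proof -
    obtain U u where U: "open U" "x \<in> U" "continuous_on U u" "\<And>y. y \<in> U \<Longrightarrow> u y \<noteq> 0 \<and> E y = span {u y}"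
      using splitting unfolding dominated_splitting_def continuous_line_field_def by metis
    have eq: "sin_angle y = \<bar>u y $ 1 - u y $ 2 * w y\<bar> / (norm (u y) * sqrt ((w y)\<^sup>2 + 1))"
      if y: "y \<in> U" for y
    proof -
      obtain k where k: "stable_vec y = k *\<^sub>R u y"
        using U(4)[OF y] stable_vec(2)[of y] span_base[of "stable_vec y" "{stable_vec y}"]
        by (auto simp: span_singleton)
      then have "k \<noteq> 0" using stable_vec(1)[of y] by auto
      have "cross2 (stable_vec y) (graph_vec y) = k * (u y $ 1 - u y $ 2 * w y)"
        by (simp add: k cross2_def algebra_simps)
      moreover have "norm (stable_vec y) = \<bar>k\<bar> * norm (u y)"
        by (simp add: k)
      moreover have "norm (graph_vec y) = sqrt ((w y)\<^sup>2 + 1)"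
        by (simp add: norm_vec2)
      ultimately show ?thesis
        using \<open>k \<noteq> 0\<close> by (simp add: sin_angle_def abs_mult)
    qed
    have "(w y)\<^sup>2 + 1 \<noteq> 0" for y
      by (smt (verit) zero_le_power2)
    then have "continuous_on U (\<lambda>y. \<bar>u y $ 1 - u y $ 2 * w y\<bar> / (norm (u y) * sqrt ((w y)\<^sup>2 + 1)))"
      using U(3,4) continuous_on_subset[OF continuous_w]
      by (intro continuous_intros continuous_on_component) auto
    then have "continuous_on U sin_angle"
      by (rule continuous_on_eq) (simp add: eq)
    then show ?thesis
      using U(1,2) by (simp add: continuous_on_eq_continuous_at)
  qed
  then show ?thesis by (simp add: continuous_at_imp_continuous_on)
qed

lemma mnorm_cocyc_le_graph_stretch: "\<exists>C. \<forall>n x. mnorm (cocyc T B n x) \<le> C * graph_stretch n x"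
proof -
  obtain \<delta> where "0 < \<delta>" and \<delta>: "\<And>x. \<delta> \<le> sin_angle x"
    using continuous_pos_bounded_below[OF continuous_sin_angle sin_angle_pos] by blast
  obtain R where R: "\<And>n x. stable_stretch n x \<le> R * graph_stretch n x"
    using stable_stretch_le_graph_stretch by blast
  have "mnorm (cocyc T B n x) \<le> (R + 1) / \<delta> * graph_stretch n x" for n x
  proof -
    have "\<delta> * (norm (stable_vec x) * norm (graph_vec x)) \<le> \<bar>cross2 (stable_vec x) (graph_vec x)\<bar>"
      using \<delta>[of x] stable_vec(1)[of x] graph_vec_nonzero[of x] by (simp add: sin_angle_def le_divide_eq)
    then have "mnorm (cocyc T B n x) \<le> (stable_stretch n x + graph_stretch n x) / \<delta>"
      unfolding stable_stretch_def graph_stretch_def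
      by (rule mnorm_le_stretch_sum[OF stable_vec(1) graph_vec_nonzero \<open>0 < \<delta>\<close>])
    also have "\<dots> \<le> (R + 1) / \<delta> * graph_stretch n x"
      using R[of n x] \<open>0 < \<delta>\<close> by (simp add: divide_right_mono field_simps)
    finally show ?thesis .
  qed
  then show ?thesis by blast
qed

lemma ln_mnorm_cocyc_approx: "\<exists>C. \<forall>n x. \<bar>ln (mnorm (cocyc T B n x)) - ln (growth_prod n x)\<bar> \<le> C"
proof -
  obtain K where "1 \<le> K" and K: "\<And>n x. growth_prod n x \<le> K * graph_stretch n x \<and> graph_stretch n x \<le> K * growth_prod n x"
    using graph_stretch_comparable by blast
  obtain C where C: "\<And>n x. mnorm (cocyc T B n x) \<le> C * graph_stretch n x"
    using mnorm_cocyc_le_graph_stretch by blast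
  have "\<bar>ln (mnorm (cocyc T B n x)) - ln (growth_prod n x)\<bar> \<le> \<bar>ln (C * K)\<bar> + ln K" for n x
  proof (rule abs_ln_diff_le[OF growth_prod_pos \<open>1 \<le> K\<close>])
    have "graph_stretch n x \<le> mnorm (cocyc T B n x)"
      using stretch_le_mnorm by (simp add: graph_stretch_def)
    then have "growth_prod n x \<le> K * mnorm (cocyc T B n x)"
      using K[of n x] \<open>1 \<le> K\<close> by (smt (verit) mult_left_mono)
    then show "growth_prod n x / K \<le> mnorm (cocyc T B n x)"
      using \<open>1 \<le> K\<close> by (simp add: divide_le_eq mult.commute)
    have "0 \<le> C * graph_stretch n x"
      using C[of n x] mnorm_nonneg order_trans by blast
    then have "0 \<le> C"
      using graph_stretch_pos[of n x] by (simp add: zero_le_mult_iff)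
    then show "mnorm (cocyc T B n x) \<le> C * K * growth_prod n x"
      using C[of n x] mult_left_mono[OF conjunct2[OF K[of n x]], of C] by (simp add: mult.assoc)
  qed
  then show ?thesis by blast
qed

lemma birkhoff_sum_ln_growth: "birkhoff_sum T (\<lambda>x. ln (growth x)) n x = ln (growth_prod n x)"
  using growth_pos by (simp add: birkhoff_sum_def growth_prod_def ln_prod less_imp_neq[symmetric])

theorem lyap_plus_eq_integral: "lyap_plus M T B = (\<integral>x. ln (growth x) \<partial>M)"
proof -
  obtain C where C: "\<And>n x. \<bar>ln (mnorm (cocyc T B n x)) - ln (growth_prod n x)\<bar> \<le> C"
    using ln_mnorm_cocyc_approx by blast
  obtain b where "\<And>x. \<bar>ln (growth x)\<bar> \<le> b"
    using continuous_bounded[OF continuous_ln_growth] by blast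
  then have "AE x in M. (\<lambda>n. birkhoff_sum T (\<lambda>x. ln (growth x)) n x / n) \<longlonglongrightarrow> (\<integral>x. ln (growth x) \<partial>M)"
    by (intro birkhoff_ergodic continuous_measurable[OF continuous_ln_growth])
  then have "AE x in M. (\<lambda>n. ln (mnorm (cocyc T B n x)) / n) \<longlonglongrightarrow> (\<integral>x. ln (growth x) \<partial>M)"
  proof eventually_elim
    case (elim x)
    show ?case
      using C by (intro average_limit_bounded_perturb[OF elim]) (simp add: birkhoff_sum_ln_growth)
  qed
  then show ?thesis
    unfolding lyap_plus_def by (rule the_AE_limit_eq)
qed

lemma measurable_inv_T: "inv T \<in> measurable M M"
  using borel_measurable_continuous_onI[OF continuous_inv_T] measurable_cong_sets[OF sets_M sets_M]
  by simp

lemma ergodic_system_inv: "ergodic_system M (inv T)"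
proof -
  have vimage_inv: "inv T -` A = T ` A" for A
    using bij_vimage_eq_inv_image[OF bij_imp_bij_inv[OF bij_T]] by (simp add: inv_inv_eq[OF bij_T])
  have vimage_image: "T -` (T ` A) = A" for A
    using bij_T by (simp add: bij_def inj_vimage_image_eq)
  have "ergodic_mp M (inv T)"
    unfolding ergodic_mp_def
  proof (intro conjI ballI impI measurable_inv_T)
    fix A assume "A \<in> sets M"
    then have "T ` A \<in> sets M"
      using measurable_sets[OF measurable_inv_T] by (simp add: vimage_inv space_eq)
    then show "measure M (inv T -` A \<inter> space M) = measure M A"
      using measure_vimage_T[of "T ` A"] by (simp add: vimage_inv vimage_image space_eq)
  next
    fix A assume "A \<in> sets M" "inv T -` A \<inter> space M = A"
    then show "measure M A = 0 \<or> measure M A = 1"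
      using invariant_set_trivial vimage_image by (metis vimage_inv space_eq Int_UNIV_right)
  qed
  then show ?thesis
    by unfold_locales (simp_all add: space_eq)
qed

lemma ln_inverse_mnorm_cocyc_inv_approx:
  "\<exists>C. \<forall>n x. \<bar>ln (inverse (mnorm (cocyc_inv T B n x)))
      - birkhoff_sum (inv T) (\<lambda>y. ln (det (B (inv T y))) - ln (growth (inv T y))) n x\<bar> \<le> C"
proof -
  obtain C where C: "\<And>n x. \<bar>ln (mnorm (cocyc T B n x)) - ln (growth_prod n x)\<bar> \<le> C"
    using ln_mnorm_cocyc_approx by blast
  have "\<bar>ln (inverse (mnorm (cocyc_inv T B n x)))
      - birkhoff_sum (inv T) (\<lambda>y. ln (det (B (inv T y))) - ln (growth (inv T y))) n x\<bar> \<le> ln 4 + C" for n x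
  proof -
    let ?y = "(inv T ^^ n) x"
    let ?A = "cocyc T B n ?y"
    have inv_eq: "cocyc_inv T B n x = matrix_inv ?A"
      using det_pos by (intro cocyc_inv_eq_matrix_inv bij_T) (simp add: less_imp_neq[symmetric])
    have "0 < det ?A"
      by (simp add: det_cocyc prod_pos det_pos)
    have "ln (det ?A) - ln (growth_prod n ?y)
        = birkhoff_sum T (\<lambda>y. ln (det (B y)) - ln (growth y)) n ?y"
      using det_pos growth_pos
      by (simp add: det_cocyc growth_prod_def birkhoff_sum_def ln_prod sum_subtractf less_imp_neq[symmetric])
    with ln_inverse_mnorm_matrix_inv[OF \<open>0 < det ?A\<close>] C[of n ?y]
      birkhoff_sum_inv[OF bij_T, of "\<lambda>y. ln (det (B y)) - ln (growth y)" n x]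
    show ?thesis
      unfolding inv_eq abs_le_iff by linarith
  qed
  then show ?thesis by blast
qed

theorem lyap_minus_eq_integral:
  "lyap_minus M T B = (\<integral>x. ln (det (B x)) \<partial>M) - (\<integral>x. ln (growth x) \<partial>M)"
proof -
  interpret inv: ergodic_system M "inv T"
    by (rule ergodic_system_inv)
  let ?h = "\<lambda>x. ln (det (B x)) - ln (growth x)"
  have cont_h: "continuous_on UNIV ?h"
    by (intro continuous_on_diff continuous_ln_det continuous_ln_growth)
  have cont_h_inv: "continuous_on UNIV (\<lambda>x. ?h (inv T x))"
    by (rule continuous_on_compose2[OF cont_h continuous_inv_T]) auto
  obtain C where C: "\<And>n x. \<bar>ln (inverse (mnorm (cocyc_inv T B n x)))
      - birkhoff_sum (inv T) (\<lambda>y. ?h (inv T y)) n x\<bar> \<le> C"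
    using ln_inverse_mnorm_cocyc_inv_approx by blast
  obtain b where "\<And>x. \<bar>?h (inv T x)\<bar> \<le> b"
    using continuous_bounded[OF cont_h_inv] by blast
  then have "AE x in M. (\<lambda>n. birkhoff_sum (inv T) (\<lambda>y. ?h (inv T y)) n x / n)
      \<longlonglongrightarrow> (\<integral>x. ?h (inv T x) \<partial>M)"
    by (intro inv.birkhoff_ergodic continuous_measurable[OF cont_h_inv])
  moreover have "(\<integral>x. ?h (inv T x) \<partial>M) = (\<integral>x. ?h x \<partial>M)"
    by (rule inv.integral_comp_T[OF continuous_measurable[OF cont_h]])
  ultimately have "AE x in M. (\<lambda>n. birkhoff_sum (inv T) (\<lambda>y. ?h (inv T y)) n x / n)
      \<longlonglongrightarrow> (\<integral>x. ?h x \<partial>M)"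
    by simp
  then have "AE x in M. (\<lambda>n. ln (inverse (mnorm (cocyc_inv T B n x))) / n)
      \<longlonglongrightarrow> (\<integral>x. ?h x \<partial>M)"
  proof eventually_elim
    case (elim x)
    show ?case by (rule average_limit_bounded_perturb[OF elim C])
  qed
  then have "lyap_minus M T B = (\<integral>x. ?h x \<partial>M)"
    unfolding lyap_minus_def by (rule the_AE_limit_eq)
  then show ?thesis
    by (simp add: Bochner_Integration.integral_diff continuous_integrable continuous_ln_det
        continuous_ln_growth)
qed

lemma corner_eq_det_div_growth: "B x $ 1 $ 1 - B x $ 2 $ 1 * w (T x) = det (B x) / growth x"
proof -
  have "B x $ 1 $ 1 * w x + B x $ 1 $ 2 = growth x * w (T x)"
    using arg_cong[OF B_graph_vec[of x], of "\<lambda>z. z $ 1"] by (simp add: matrix_vector_mult_2_nth)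
  then have "(B x $ 1 $ 1 - B x $ 2 $ 1 * w (T x)) * growth x
      = B x $ 1 $ 1 * growth x - B x $ 2 $ 1 * (B x $ 1 $ 1 * w x + B x $ 1 $ 2)"
    by (simp add: algebra_simps)
  also have "\<dots> = det (B x)"
    by (simp add: growth_def det_2 algebra_simps)
  finally have "(B x $ 1 $ 1 - B x $ 2 $ 1 * w (T x)) * growth x = det (B x)" .
  then show ?thesis
    using growth_pos[of x] by (simp add: field_simps)
qed

lemma integral_ln_corner:
  "(\<integral>x. ln (B x $ 1 $ 1 - B x $ 2 $ 1 * w (T x)) \<partial>M)
     = (\<integral>x. ln (det (B x)) \<partial>M) - (\<integral>x. ln (growth x) \<partial>M)"
  using det_pos growth_pos
  by (simp add: corner_eq_det_div_growth ln_divide_pos Bochner_Integration.integral_diff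
      continuous_integrable continuous_ln_det continuous_ln_growth)

end

section \<open>The rotated family\<close>

lemma rot_nth [simp]:
  "rot t $ 1 $ 1 = cos t" "rot t $ 1 $ 2 = - sin t" "rot t $ 2 $ 1 = sin t" "rot t $ 2 $ 2 = cos t"
  by (simp_all add: rot_def)

lemma rot_0: "rot 0 = mat 1"
  by (simp add: mat2_eq_iff mat_def)

lemma det_rot: "det (rot t) = 1"
  by (simp add: det_2 flip: power2_eq_square)

lemma det_mult_rot: "det (A ** rot t) = det A"
  by (simp add: det_mul det_rot)

lemma invariant_graph_growth_nonzero:
  assumes splitting: "dominated_splitting T B E (\<lambda>x. span {vector [w x, 1]})"
    and "det (B x) \<noteq> 0"
  shows "B x $ 2 $ 1 * w x + B x $ 2 $ 2 \<noteq> 0"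
proof
  let ?v = "\<lambda>x. vector [w x, 1] :: real^2"
  assume growth_0: "B x $ 2 $ 1 * w x + B x $ 2 $ 2 = 0"
  have "(\<lambda>z. B x *v z) ` span {?v x} = span {?v (T x)}"
    using splitting by (simp add: dominated_splitting_def)
  then obtain k where k: "B x *v ?v x = k *\<^sub>R ?v (T x)"
    using span_base[of "?v x" "{?v x}"] by (auto simp: span_singleton)
  have "k = (B x *v ?v x) $ 2"
    by (simp add: k)
  then have "k = 0"
    using growth_0 by (simp add: matrix_vector_mult_2_nth)
  have "?v x = matrix_inv (B x) *v (B x *v ?v x)"
    using matrix_inv_inverse[of "B x"] \<open>det (B x) \<noteq> 0\<close>
    by (simp add: invertible_det_nz matrix_vector_mul_assoc)
  also have "\<dots> = 0"
    using k \<open>k = 0\<close> by simp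
  finally show False
    by (metis vector_2(2) zero_index zero_neq_one)
qed

lemma continuous_on_connected_pos:
  fixes f :: "'a::topological_space \<Rightarrow> real"
  assumes "connected S" "continuous_on S f" "\<And>s. s \<in> S \<Longrightarrow> f s \<noteq> 0"
    and "a \<in> S" "0 < f a" "s \<in> S"
  shows "0 < f s"
proof (rule ccontr)
  assume "\<not> 0 < f s"
  moreover have "connected (f ` S)"
    using assms(1,2) connected_continuous_image by blast
  moreover have "f s \<in> f ` S" "f a \<in> f ` S"
    using assms(4,6) by simp_all
  ultimately have "0 \<in> f ` S"
    using \<open>0 < f a\<close> unfolding connected_iff_interval by (meson less_imp_le not_le)
  then obtain t where "t \<in> S" "f t = 0" by auto
  with assms(3) show False by blast
qed

text \<open>The growth factor of the invariant graph direction of \<open>H R\<^sub>\<theta>\<close> never vanishes, by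
  invertibility, so it cannot change sign on the connected parameter interval.\<close>
lemma rotated_growth_pos:
  fixes H :: "'a::topological_space \<Rightarrow> real^2^2" and u :: "real \<Rightarrow> 'a \<Rightarrow> real"
  assumes "0 < \<epsilon>0" and u_cont: "continuous_on ({-\<epsilon>0<..<\<epsilon>0} \<times> UNIV) (\<lambda>(\<theta>, x). u \<theta> x)"
    and "u 0 x = 0" "0 < H x $ 2 $ 2"
    and nonzero: "\<And>\<theta>. \<bar>\<theta>\<bar> < \<epsilon>0 \<Longrightarrow> (H x ** rot \<theta>) $ 2 $ 1 * u \<theta> x + (H x ** rot \<theta>) $ 2 $ 2 \<noteq> 0"
    and "\<bar>\<theta>\<bar> < \<epsilon>0"
  shows "0 < (H x ** rot \<theta>) $ 2 $ 1 * u \<theta> x + (H x ** rot \<theta>) $ 2 $ 2"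
proof (rule continuous_on_connected_pos[where S="{-\<epsilon>0<..<\<epsilon>0}" and a=0
    and f="\<lambda>t. (H x ** rot t) $ 2 $ 1 * u t x + (H x ** rot t) $ 2 $ 2"])
  have "continuous_on {-\<epsilon>0<..<\<epsilon>0} (\<lambda>t. u t x)"
    by (rule continuous_on_compose2[OF u_cont, where f="\<lambda>t. (t, x)", simplified])
      (auto intro!: continuous_intros)
  then show "continuous_on {-\<epsilon>0<..<\<epsilon>0} (\<lambda>t. (H x ** rot t) $ 2 $ 1 * u t x + (H x ** rot t) $ 2 $ 2)"
    by (simp only: matrix_mult_2_nth rot_nth) (intro continuous_intros)
qed (use assms in \<open>auto simp: rot_0 abs_less_iff\<close>)

lemma rotated_graph_dominated_cocycle:
  fixes M :: "'a::metric_space measure" and H :: "'a \<Rightarrow> real^2^2"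
  assumes "compact (UNIV :: 'a set)" "bij T" "continuous_on UNIV (inv T)"
    and "prob_space M" "sets M = sets borel" "space M = UNIV" "ergodic_mp M T"
    and H_cont: "continuous_on UNIV H" and det_H: "\<And>x. 0 < det (H x)" and "\<And>x. 0 < H x $ 2 $ 2"
    and "0 < \<epsilon>0" and u_cont: "continuous_on ({-\<epsilon>0<..<\<epsilon>0} \<times> UNIV) (\<lambda>(\<theta>, x). u \<theta> x)"
    and "\<And>x. u 0 x = 0"
    and splittings: "\<And>\<theta>. \<bar>\<theta>\<bar> < \<epsilon>0 \<Longrightarrow>
           \<exists>E. dominated_splitting T (\<lambda>x. H x ** rot \<theta>) E (\<lambda>x. span {vector [u \<theta> x, 1]})"
    and "\<bar>\<theta>\<bar> < \<epsilon>0"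
  shows "\<exists>E. graph_dominated_cocycle M T (\<lambda>x. H x ** rot \<theta>) (u \<theta>) E"
proof -
  obtain E where E: "dominated_splitting T (\<lambda>x. H x ** rot \<theta>) E (\<lambda>x. span {vector [u \<theta> x, 1]})"
    using splittings[OF \<open>\<bar>\<theta>\<bar> < \<epsilon>0\<close>] by blast
  have "0 < (H x ** rot \<theta>) $ 2 $ 1 * u \<theta> x + (H x ** rot \<theta>) $ 2 $ 2" for x
  proof (rule rotated_growth_pos[OF \<open>0 < \<epsilon>0\<close> u_cont])
    fix t :: real assume "\<bar>t\<bar> < \<epsilon>0"
    then obtain E' where "dominated_splitting T (\<lambda>x. H x ** rot t) E' (\<lambda>x. span {vector [u t x, 1]})"
      using splittings by blast
    then show "(H x ** rot t) $ 2 $ 1 * u t x + (H x ** rot t) $ 2 $ 2 \<noteq> 0"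
      by (rule invariant_graph_growth_nonzero) (simp add: det_mult_rot det_H less_imp_neq[symmetric])
  qed (use assms in auto)
  moreover have "continuous_on UNIV (\<lambda>x. (H x ** rot \<theta>) $ i $ j)" for i j
    by (simp only: matrix_mult_2_nth rot_nth) (intro continuous_intros continuous_on_component H_cont)
  moreover have "continuous_on UNIV (u \<theta>)"
    by (rule continuous_on_compose2[OF u_cont, where f="\<lambda>x. (\<theta>, x)", simplified])
      (use \<open>\<bar>\<theta>\<bar> < \<epsilon>0\<close> in \<open>auto intro!: continuous_intros simp: abs_less_iff\<close>)
  ultimately have "graph_dominated_cocycle M T (\<lambda>x. H x ** rot \<theta>) (u \<theta>) E"
    using assms E
    by (intro graph_dominated_cocycle.intro ergodic_system.intro ergodic_system_axioms.intro
        graph_dominated_cocycle_axioms.intro) (simp_all add: det_mult_rot)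
  then show ?thesis by blast
qed

theorem proposition3p2:
  fixes M :: "'a::metric_space measure" and T :: "'a \<Rightarrow> 'a"
    and H :: "'a \<Rightarrow> real^2^2" and u :: "real \<Rightarrow> 'a \<Rightarrow> real" and \<epsilon>0 :: real
  assumes "compact (UNIV :: 'a set)"
    and "bij T" and "continuous_on UNIV T" and "continuous_on UNIV (inv T)"
    and "prob_space M" and "sets M = sets borel" and "space M = UNIV"
    and "ergodic_mp M T"
    and "continuous_on UNIV H"
    and "\<And>x. det (H x) > 0"
    and "\<And>x. H x $ 1 $ 2 = 0"
    and "\<And>x. H x $ 2 $ 2 > 0"
    and "\<exists>E. dominated_splitting T H E (\<lambda>x. span {axis 2 1})"
    and "\<epsilon>0 > 0"
    and "continuous_on ({-\<epsilon>0<..<\<epsilon>0} \<times> UNIV) (\<lambda>(\<theta>, x). u \<theta> x)"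
    and "\<And>x. u 0 x = 0"
    and "\<And>\<theta>. \<bar>\<theta>\<bar> < \<epsilon>0 \<Longrightarrow>
           \<exists>E. dominated_splitting T (\<lambda>x. H x ** rot \<theta>) E (\<lambda>x. span {vector [u \<theta> x, 1]})"
  shows "\<exists>\<epsilon>>0. \<forall>\<theta>. \<bar>\<theta>\<bar> < \<epsilon> \<longrightarrow>
           lyap_plus M T (\<lambda>x. H x ** rot \<theta>) =
             lyap_plus M T H + lyap_minus M T H
             - (\<integral>x. ln ((H x ** rot \<theta>) $ 1 $ 1 - (H x ** rot \<theta>) $ 2 $ 1 * u \<theta> (T x)) \<partial>M)"
proof (intro exI[of _ \<epsilon>0] conjI allI impI)
  fix \<theta> :: real assume "\<bar>\<theta>\<bar> < \<epsilon>0"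
  have family: "\<exists>E. graph_dominated_cocycle M T (\<lambda>x. H x ** rot t) (u t) E" if "\<bar>t\<bar> < \<epsilon>0" for t
    using assms that by (intro rotated_graph_dominated_cocycle) auto
  obtain E where D: "graph_dominated_cocycle M T (\<lambda>x. H x ** rot \<theta>) (u \<theta>) E"
    using family[OF \<open>\<bar>\<theta>\<bar> < \<epsilon>0\<close>] by blast
  obtain E0 where "graph_dominated_cocycle M T (\<lambda>x. H x ** rot 0) (u 0) E0"
    using family[of 0] \<open>\<epsilon>0 > 0\<close> by auto
  then have D0: "graph_dominated_cocycle M T H (u 0) E0"
    by (simp add: rot_0)
  show "lyap_plus M T (\<lambda>x. H x ** rot \<theta>) = lyap_plus M T H + lyap_minus M T H
      - (\<integral>x. ln ((H x ** rot \<theta>) $ 1 $ 1 - (H x ** rot \<theta>) $ 2 $ 1 * u \<theta> (T x)) \<partial>M)"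
    using graph_dominated_cocycle.lyap_plus_eq_integral[OF D]
      graph_dominated_cocycle.lyap_plus_eq_integral[OF D0]
      graph_dominated_cocycle.lyap_minus_eq_integral[OF D0]
      graph_dominated_cocycle.integral_ln_corner[OF D]
    by (simp add: det_mult_rot)
qed (rule \<open>\<epsilon>0 > 0\<close>)

end
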